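(* $\mathsf{AP}(R_3,R_3)=\operatorname{Pol}(R_3,R'_3)=\mathsf{I}$.
   Context: Tuples in $\{0,1\}^4$ are written as strings $abcd$. The relations $R_1,\dots,R_5\subseteq\{0,1\}^4$ are $R_1=\{0000,1000,0100,1100,1010,0110,1001,0101,0011,1011,0111,1111\}$, $R_2=\{0000,1000,0100,1100,1010,0101,0011,1111\}$, $R_3=\{0000,1100,1010,0101,0011,1011,0111,1111\}$, $R_4=\{0000,1100,1010,0101,0011,1111\}$, $R_5=\{0000,1100,1010,0110,1001,0101,0011,1111\}$. For $R,S\subseteq\{0,1\}^4$, a Boolean function $f\colon\{0,1\}^n\to\{0,1\}$ is analogy-preserving relative to $(R,S)$ if for all $\mathbf{a},\mathbf{b},\mathbf{c},\mathbf{d}\in\{0,1\}^n$ with $(a_i,b_i,c_i,d_i)\in R$ for every $i$ and such that $(f(\mathbf{a}),f(\mathbf{b}),f(\mathbf{c}),x)\in S$ for some $x\in\{0,1\}$, we have $(f(\mathbf{a}),f(\mathbf{b}),f(\mathbf{c}),f(\mathbf{d}))\in S$; $\mathsf{AP}(R,S)$ is the set of all such functions of all arities. $S':=S\cup\{(a,b,c,d)\mid\nexists x\colon(a,b,c,x)\in S\}$, and $\operatorname{Pol}(R,S)$ is the set of Boolean functions $f$ with $f(\mathbf{a}_1,\dots,\mathbf{a}_n)\in S$ (componentwise) for all $\mathbf{a}_1,\dots,\mathbf{a}_n\in R$. $\mathsf{I}$ is the set of all Boolean functions (of all arities) that are constant or a projection. *)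

theory Defs
  imports Main
begin

text \<open>Tuples in {0,1}^4 are 4-tuples of booleans (0 = False, 1 = True).
An n-ary Boolean function is represented by f :: bool list => bool,
of which only the values on lists of length n matter.\<close>

type_synonym tup4 = "bool \<times> bool \<times> bool \<times> bool"

definition b4 :: "nat \<Rightarrow> nat \<Rightarrow> nat \<Rightarrow> nat \<Rightarrow> tup4" where
  "b4 a b c d = (a \<noteq> 0, b \<noteq> 0, c \<noteq> 0, d \<noteq> 0)"

definition R3 :: "tup4 set" where
  "R3 = {b4 0 0 0 0, b4 1 1 0 0, b4 1 0 1 0, b4 0 1 0 1, b4 0 0 1 1,
         b4 1 0 1 1, b4 0 1 1 1, b4 1 1 1 1}"

definition prime_rel :: "tup4 set \<Rightarrow> tup4 set" where
  "prime_rel S = S \<union> {(a, b, c, d). \<not> (\<exists>x. (a, b, c, x) \<in> S)}"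

definition AP :: "nat \<Rightarrow> tup4 set \<Rightarrow> tup4 set \<Rightarrow> (bool list \<Rightarrow> bool) \<Rightarrow> bool" where
  "AP n R S f \<longleftrightarrow>
    (\<forall>a b c d. length a = n \<and> length b = n \<and> length c = n \<and> length d = n \<and>
       (\<forall>i<n. (a ! i, b ! i, c ! i, d ! i) \<in> R) \<and>
       (\<exists>x. (f a, f b, f c, x) \<in> S)
       \<longrightarrow> (f a, f b, f c, f d) \<in> S)"

definition Pol :: "nat \<Rightarrow> tup4 set \<Rightarrow> tup4 set \<Rightarrow> (bool list \<Rightarrow> bool) \<Rightarrow> bool" where
  "Pol n R S f \<longleftrightarrow>
    (\<forall>t :: nat \<Rightarrow> tup4. (\<forall>i<n. t i \<in> R) \<longrightarrow>
       (f (map (\<lambda>i. fst (t i)) [0..<n]),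
        f (map (\<lambda>i. fst (snd (t i))) [0..<n]),
        f (map (\<lambda>i. fst (snd (snd (t i)))) [0..<n]),
        f (map (\<lambda>i. snd (snd (snd (t i)))) [0..<n])) \<in> S)"

definition in_I :: "nat \<Rightarrow> (bool list \<Rightarrow> bool) \<Rightarrow> bool" where
  "in_I n f \<longleftrightarrow>
    (\<exists>v. \<forall>x. length x = n \<longrightarrow> f x = v) \<or>
    (\<exists>i<n. \<forall>x. length x = n \<longrightarrow> f x = x ! i)"

end

theory Submission
  imports Defs
begin

text \<open>Every analogy-preserving function is a polymorphism of (R, S'), and constants and
projections preserve analogies in R3, so it remains to show that a polymorphism f of
(R3, R3') is trivial. Writing x' for the complement of x: if f(0) = 1, the tuples (1,x',x,0) and (x',x,x',1) of R3 force f to be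
constantly 1. If f(0) = 0, the tuples (0,x,y,x\<or>y) of R3 make f a join-homomorphism, so
f is either constantly 0 or satisfies f(1) = 1; in the latter case the tuples (1,x,x',0) make f
self-dual. A join-homomorphism with f(0) = 0 is the join of the coordinates i with
f(e_i) = 1, and self-duality leaves exactly one such coordinate.\<close>

lemma R3_iff:
  "(p, q, r, s) \<in> R3 \<longleftrightarrow>
   (p, q, r, s) \<in> {(False,False,False,False), (True,True,False,False), (True,False,True,False),
     (False,True,False,True), (False,False,True,True), (True,False,True,True),
     (False,True,True,True), (True,True,True,True)}"
  by (cases p; cases q; cases r; cases s) (auto simp: R3_def b4_def)

lemma prime_rel_R3_iff:
  "(p, q, r, s) \<in> prime_rel R3 \<longleftrightarrow>
   (p, q, r, s) \<notin> {(False,False,False,True), (False,False,True,False), (False,True,False,False),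
     (False,True,True,False), (True,True,False,True), (True,True,True,False)}"
  by (cases p; cases q; cases r; cases s) (auto simp: prime_rel_def R3_def b4_def)

lemma Pol_applyD:
  assumes "Pol n R S f" "length a = n" "length b = n" "length c = n" "length d = n"
    and "\<forall>i<n. (a ! i, b ! i, c ! i, d ! i) \<in> R"
  shows "(f a, f b, f c, f d) \<in> S"
proof -
  define t where "t i = (a ! i, b ! i, c ! i, d ! i)" for i
  have columns: "map (\<lambda>i. fst (t i)) [0..<n] = a" "map (\<lambda>i. fst (snd (t i))) [0..<n] = b"
    "map (\<lambda>i. fst (snd (snd (t i)))) [0..<n] = c" "map (\<lambda>i. snd (snd (snd (t i)))) [0..<n] = d"
    using assms(2-5) by (auto simp: t_def list_eq_iff_nth_eq)
  have "\<forall>i<n. t i \<in> R" using assms(6) by (simp add: t_def)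
  with assms(1) show ?thesis unfolding Pol_def columns[symmetric] by blast
qed

lemma AP_imp_Pol: "AP n R S f \<Longrightarrow> Pol n R (prime_rel S) f"
  unfolding Pol_def
proof (intro allI impI)
  fix t :: "nat \<Rightarrow> tup4"
  assume ap: "AP n R S f" and t: "\<forall>i<n. t i \<in> R"
  let ?a = "map (\<lambda>i. fst (t i)) [0..<n]" and ?b = "map (\<lambda>i. fst (snd (t i))) [0..<n]"
  let ?c = "map (\<lambda>i. fst (snd (snd (t i)))) [0..<n]"
  let ?d = "map (\<lambda>i. snd (snd (snd (t i)))) [0..<n]"
  show "(f ?a, f ?b, f ?c, f ?d) \<in> prime_rel S"
  proof (cases "\<exists>x. (f ?a, f ?b, f ?c, x) \<in> S")
    case True
    have "\<forall>i<n. (?a ! i, ?b ! i, ?c ! i, ?d ! i) \<in> R" using t by simp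
    with True ap have "(f ?a, f ?b, f ?c, f ?d) \<in> S"
      unfolding AP_def by (metis length_map length_upt minus_nat.diff_0)
    then show ?thesis by (simp add: prime_rel_def)
  next
    case False
    then show ?thesis by (simp add: prime_rel_def)
  qed
qed

lemma in_I_imp_AP:
  assumes "in_I n f" "R \<subseteq> S"
    and "(False, False, False, False) \<in> S" "(True, True, True, True) \<in> S"
  shows "AP n R S f"
  using assms(1) unfolding in_I_def
proof (elim disjE exE conjE)
  fix v assume "\<forall>x. length x = n \<longrightarrow> f x = v"
  then show "AP n R S f" using assms(3,4) by (cases v) (auto simp: AP_def)
next
  fix i assume "i < n" "\<forall>x. length x = n \<longrightarrow> f x = x ! i"
  then show "AP n R S f" using assms(2) by (auto simp: AP_def)
qed

definition unit_vector :: "nat \<Rightarrow> nat \<Rightarrow> bool list" where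
  "unit_vector n i = map (\<lambda>k. k = i) [0..<n]"

lemma length_unit_vector [simp]: "length (unit_vector n i) = n"
  by (simp add: unit_vector_def)

lemma nth_unit_vector [simp]: "k < n \<Longrightarrow> unit_vector n i ! k = (k = i)"
  by (simp add: unit_vector_def)

locale join_hom =
  fixes n :: nat and f :: "bool list \<Rightarrow> bool"
  assumes join: "\<lbrakk>length x = n; length y = n\<rbrakk> \<Longrightarrow> f (map2 (\<or>) x y) = (f x \<or> f y)"
    and bottom: "\<not> f (replicate n False)"
begin

lemma mono:
  assumes "length x = n" "length y = n" "\<forall>i<n. x ! i \<longrightarrow> y ! i" "f x"
  shows "f y"
proof -
  have "map2 (\<or>) x y = y" using assms(1-3) by (auto simp: list_eq_iff_nth_eq)
  then show ?thesis using join[OF assms(1,2)] assms(4) by simp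
qed

lemma true_at_unit_vector:
  "\<lbrakk>length x = n; f x\<rbrakk> \<Longrightarrow> \<exists>i<n. f (unit_vector n i)"
proof (induction "card {k. k < n \<and> x ! k}" arbitrary: x rule: less_induct)
  case less
  have "x \<noteq> replicate n False" using bottom less.prems(2) by auto
  then obtain i where i: "i < n" "x ! i" using less.prems(1) by (auto simp: list_eq_iff_nth_eq)
  let ?y = "x[i := False]"
  have "map2 (\<or>) (unit_vector n i) ?y = x"
    using less.prems(1) i by (auto simp: list_eq_iff_nth_eq nth_list_update)
  then have "f (unit_vector n i) \<or> f ?y"
    using join[of "unit_vector n i" ?y] less.prems by simp
  moreover have "card {k. k < n \<and> ?y ! k} < card {k. k < n \<and> x ! k}"
  proof (rule psubset_card_mono)
    show "{k. k < n \<and> ?y ! k} \<subset> {k. k < n \<and> x ! k}"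
      using i less.prems(1) by (auto simp: nth_list_update split: if_splits)
  qed simp
  ultimately show ?case using less.hyps[of ?y] less.prems(1) i(1) by auto
qed

end

context
  fixes n :: nat and f :: "bool list \<Rightarrow> bool"
  assumes pol: "Pol n R3 (prime_rel R3) f"
begin

private abbreviation "zeros \<equiv> replicate n False"
private abbreviation "ones \<equiv> replicate n True"

lemma Pol_R3_const_True:
  assumes "f zeros" "length x = n"
  shows "f x"
proof (rule ccontr)
  assume fx: "\<not> f x"
  have "(f ones, f zeros, f ones, f ones) \<in> prime_rel R3"
    by (rule Pol_applyD[OF pol]) (auto simp: R3_iff)
  then have f_ones: "f ones" using assms(1) by (auto simp: prime_rel_R3_iff)
  have "(f ones, f (map Not x), f x, f zeros) \<in> prime_rel R3"
    by (rule Pol_applyD[OF pol]) (use assms(2) in \<open>auto simp: R3_iff\<close>)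
  then have "\<not> f (map Not x)" using f_ones assms(1) fx by (auto simp: prime_rel_R3_iff)
  moreover have "(f (map Not x), f x, f (map Not x), f ones) \<in> prime_rel R3"
    by (rule Pol_applyD[OF pol]) (use assms(2) in \<open>auto simp: R3_iff\<close>)
  ultimately show False using f_ones fx by (auto simp: prime_rel_R3_iff)
qed

lemma Pol_R3_join_hom:
  assumes "\<not> f zeros"
  shows "join_hom n f"
proof
  fix x y :: "bool list" assume "length x = n" "length y = n"
  then have "(f zeros, f x, f y, f (map2 (\<or>) x y)) \<in> prime_rel R3"
    by (intro Pol_applyD[OF pol]) (auto simp: R3_iff)
  then show "f (map2 (\<or>) x y) = (f x \<or> f y)" using assms by (auto simp: prime_rel_R3_iff)
qed (use assms in simp)

lemma Pol_R3_self_dual: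
  assumes "\<not> f zeros" "f ones" "length x = n"
  shows "f (map Not x) = (\<not> f x)"
proof -
  interpret join_hom n f using Pol_R3_join_hom assms(1) .
  have "(f ones, f x, f (map Not x), f zeros) \<in> prime_rel R3"
    by (rule Pol_applyD[OF pol]) (use assms(3) in \<open>auto simp: R3_iff\<close>)
  then have "\<not> (f x \<and> f (map Not x))" using assms(1,2) by (auto simp: prime_rel_R3_iff)
  moreover have "map2 (\<or>) x (map Not x) = ones" using assms(3) by (auto simp: list_eq_iff_nth_eq)
  then have "f x \<or> f (map Not x)" using join[of x "map Not x"] assms(2,3) by simp
  ultimately show ?thesis by blast
qed

lemma Pol_R3_imp_in_I: "in_I n f"
proof (cases "f zeros")
  case True
  then show ?thesis using Pol_R3_const_True unfolding in_I_def by blast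
next
  case f_zeros: False
  interpret join_hom n f using Pol_R3_join_hom f_zeros .
  show ?thesis
  proof (cases "f ones")
    case False
    then have "\<not> f x" if "length x = n" for x using mono[of x ones] that by auto
    then show ?thesis unfolding in_I_def by blast
  next
    case True
    then obtain i where i: "i < n" "f (unit_vector n i)"
      using true_at_unit_vector[of ones] by auto
    have "f y = y ! i" if y: "length y = n" for y
    proof (cases "y ! i")
      case True
      then show ?thesis using mono[of "unit_vector n i" y] i y by auto
    next
      case False
      then have "f (map Not y)" using mono[of "unit_vector n i" "map Not y"] i y by auto
      then show ?thesis using Pol_R3_self_dual[OF f_zeros \<open>f ones\<close> y] False by simp
    qed
    then show ?thesis unfolding in_I_def using i(1) by blast
  qed
qed

end

theorem mainTheorem9:
  shows "\<forall>n f. (AP n R3 R3 f \<longleftrightarrow> Pol n R3 (prime_rel R3) f)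
              \<and> (Pol n R3 (prime_rel R3) f \<longleftrightarrow> in_I n f)"
proof -
  have I_AP: "in_I n f \<Longrightarrow> AP n R3 R3 f" for n f
    by (rule in_I_imp_AP) (auto simp: R3_iff)
  show ?thesis using AP_imp_Pol Pol_R3_imp_in_I I_AP by blast
qed

end
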